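(* Let $d\ge2$, $N\ge1$, and $\beta=0$ (infinite temperature). Let $\mathbf p$ be a probability vector on $d$ levels and $\Pi$ a $d\times d$ permutation matrix, written as a product of transposition matrices $\Pi=\Pi_{i_mj_m}\Pi_{i_{m-1}j_{m-1}}\cdots\Pi_{i_1j_1}$ which is a decomposition into neighbour transpositions with respect to $\mathbf p$ (as defined in the context). Let $\mathcal P^{\Pi}=\mathcal P^{(i_mj_m)}\circ\cdots\circ\mathcal P^{(i_1j_1)}$. Then $$\mathcal P^{\Pi}(\mathbf p\otimes\boldsymbol\eta_M)=\mathbf q\otimes\boldsymbol\eta_M,\qquad \mathbf q=\big(\Pi+\epsilon\,\boldsymbol\Delta\big)\mathbf p+o\big(N^{-1/2}\big)\xrightarrow{N\to\infty}\Pi\mathbf p,$$ with $\epsilon=(\pi N)^{-1/2}$ and $$\boldsymbol\Delta=\sum_{l=1}^{m}\Big(\Pi_{i_mj_m}\cdots\Pi_{i_{l+1}j_{l+1}}\Big)\big(\mathbb 1-\Pi_{i_lj_l}\big)\Big(\Pi_{i_{l-1}j_{l-1}}\cdots\Pi_{i_1j_1}\Big)$$ (empty products being the identity).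
   Context: Setting: a $d$-level system with energies $E_1,\dots,E_d$; at $\beta=0$ its thermal distribution is uniform. An $N$-dimensional memory with trivial Hamiltonian has thermal state $\boldsymbol\eta_M=(1/N,\dots,1/N)$. Joint states are probability vectors $\mathbf Q$ of length $dN$, entry $(a-1)N+k$ corresponding to system level $a$ and memory level $k$; the joint thermal distribution $\Gamma=\boldsymbol\gamma\otimes\boldsymbol\eta_M$ is here uniform. $\Pi_{ij}$ denotes the permutation matrix transposing entries $i,j$. Two-level thermalisation $T_{xy}$: $Q_x\mapsto (Q_x+Q_y)\Gamma_x/(\Gamma_x+\Gamma_y)$, $Q_y\mapsto (Q_x+Q_y)\Gamma_y/(\Gamma_x+\Gamma_y)$, other entries unchanged. Round $\mathcal R^{(ij)}_k$ ($k=1,\dots,N$): apply sequentially, for $l=1,\dots,N$, $T_{(j-1)N+k,\,(i-1)N+l}$. $\widetilde{\mathcal P}^{(ij)}=\mathcal R^{(ij)}_N\circ\cdots\circ\mathcal R^{(ij)}_1$. Memory thermalisation $\mathcal T(\mathbf Q)=\mathbf q\otimes\boldsymbol\eta_M$, $q_a=\sum_{k}Q_{(a-1)N+k}$. $\mathcal P^{(ij)}=\mathcal T\circ\widetilde{\mathcal P}^{(ij)}$. $\beta$-order: for a distribution $\mathbf r$, its $\beta$-order is the permutation $\pi_{\mathbf r}$ arranging $(r_1/\gamma_1,\dots,r_d/\gamma_d)$ non-increasingly ($\pi_{\mathbf r}(a)$ is the position of $a$). A decomposition $\Pi=\Pi_{i_mj_m}\cdots\Pi_{i_1j_1}$ is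 into neighbour transpositions with respect to $\mathbf p$ if for each $k$ the transposition $\Pi_{i_kj_k}$ changes the $\beta$-order of $\Pi_{i_{k-1}j_{k-1}}\cdots\Pi_{i_1j_1}\mathbf p$ only by a transposition of two adjacent elements. *)

theory Defs
  imports Complex_Main
begin

text \<open>Conventions: all vectors are functions nat => real with 1-based indices.
  A system distribution is indexed by levels 1..d; a joint distribution of length d*N
  is indexed by 1..d*N, entry (a-1)*N+k corresponding to system level a, memory level k.
  Temperature beta = 0, so the system thermal distribution gamma is uniform (1/d),
  the memory thermal state eta_M is uniform (1/N), and the joint thermal state Gamma
  is uniform (1/(d*N)).\<close>

definition gamma0 :: "nat \<Rightarrow> nat \<Rightarrow> real" where
  "gamma0 d a = 1 / real d"

definition etaM :: "nat \<Rightarrow> nat \<Rightarrow> real" where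
  "etaM N k = 1 / real N"

definition Gamma0 :: "nat \<Rightarrow> nat \<Rightarrow> nat \<Rightarrow> real" where
  "Gamma0 d N x = gamma0 d ((x - 1) div N + 1) * etaM N ((x - 1) mod N + 1)"

definition tensor :: "nat \<Rightarrow> nat \<Rightarrow> (nat \<Rightarrow> real) \<Rightarrow> (nat \<Rightarrow> real) \<Rightarrow> nat \<Rightarrow> real" where
  "tensor d N q e x = (if 1 \<le> x \<and> x \<le> d * N
      then q ((x - 1) div N + 1) * e ((x - 1) mod N + 1) else 0)"

definition therm2 :: "(nat \<Rightarrow> real) \<Rightarrow> nat \<Rightarrow> nat \<Rightarrow> (nat \<Rightarrow> real) \<Rightarrow> nat \<Rightarrow> real" where
  "therm2 G x y Q = Q(x := (Q x + Q y) * G x / (G x + G y),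
                      y := (Q x + Q y) * G y / (G x + G y))"

definition round_ij :: "nat \<Rightarrow> nat \<Rightarrow> nat \<Rightarrow> nat \<Rightarrow> nat \<Rightarrow> (nat \<Rightarrow> real) \<Rightarrow> nat \<Rightarrow> real" where
  "round_ij d N i j k Q =
     foldl (\<lambda>Q' l. therm2 (Gamma0 d N) ((j - 1) * N + k) ((i - 1) * N + l) Q') Q [1..<Suc N]"

definition Ptilde :: "nat \<Rightarrow> nat \<Rightarrow> nat \<Rightarrow> nat \<Rightarrow> (nat \<Rightarrow> real) \<Rightarrow> nat \<Rightarrow> real" where
  "Ptilde d N i j Q = foldl (\<lambda>Q' k. round_ij d N i j k Q') Q [1..<Suc N]"

definition marg :: "nat \<Rightarrow> (nat \<Rightarrow> real) \<Rightarrow> nat \<Rightarrow> real" where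
  "marg N Q a = (\<Sum>k = 1..N. Q ((a - 1) * N + k))"

definition memtherm :: "nat \<Rightarrow> nat \<Rightarrow> (nat \<Rightarrow> real) \<Rightarrow> nat \<Rightarrow> real" where
  "memtherm d N Q = tensor d N (marg N Q) (etaM N)"

definition Pij :: "nat \<Rightarrow> nat \<Rightarrow> nat \<Rightarrow> nat \<Rightarrow> (nat \<Rightarrow> real) \<Rightarrow> nat \<Rightarrow> real" where
  "Pij d N i j Q = memtherm d N (Ptilde d N i j Q)"

text \<open>For ts = [(i_1,j_1), ..., (i_m,j_m)]:
  P^Pi = P^(i_m j_m) o ... o P^(i_1 j_1) (first pair applied first).\<close>
definition PPi :: "nat \<Rightarrow> nat \<Rightarrow> (nat \<times> nat) list \<Rightarrow> (nat \<Rightarrow> real) \<Rightarrow> nat \<Rightarrow> real" where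
  "PPi d N ts Q = foldl (\<lambda>Q' ij. Pij d N (fst ij) (snd ij) Q') Q ts"

definition swapv :: "nat \<Rightarrow> nat \<Rightarrow> (nat \<Rightarrow> real) \<Rightarrow> nat \<Rightarrow> real" where
  "swapv i j r a = (if a = i then r j else if a = j then r i else r a)"

text \<open>Action of Pi_{i_m j_m} ... Pi_{i_1 j_1} (first pair applied first).\<close>
definition permv :: "(nat \<times> nat) list \<Rightarrow> (nat \<Rightarrow> real) \<Rightarrow> nat \<Rightarrow> real" where
  "permv ts r = foldl (\<lambda>r' ij. swapv (fst ij) (snd ij) r') r ts"

text \<open>Delta p = sum_l (Pi_{>l}) (1 - Pi_{i_l j_l}) (Pi_{<l}) p  (0-based l here).\<close>
definition Delta_apply :: "(nat \<times> nat) list \<Rightarrow> (nat \<Rightarrow> real) \<Rightarrow> nat \<Rightarrow> real" where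
  "Delta_apply ts p a = (\<Sum>l < length ts.
      permv (drop (Suc l) ts)
        (\<lambda>b. permv (take l ts) p b - swapv (fst (ts ! l)) (snd (ts ! l)) (permv (take l ts) p) b) a)"

definition prob_vec :: "nat \<Rightarrow> (nat \<Rightarrow> real) \<Rightarrow> bool" where
  "prob_vec d p \<longleftrightarrow> (\<forall>a \<in> {1..d}. 0 \<le> p a) \<and> (\<Sum>a = 1..d. p a) = 1"

text \<open>pi is a beta-order of r: a permutation of {1..d} (pi a = position of a) arranging
  (r_1/gamma_1, ..., r_d/gamma_d) non-increasingly.\<close>
definition beta_order :: "nat \<Rightarrow> (nat \<Rightarrow> real) \<Rightarrow> (nat \<Rightarrow> nat) \<Rightarrow> bool" where
  "beta_order d r \<pi> \<longleftrightarrow> bij_betw \<pi> {1..d} {1..d} \<and>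
     (\<forall>a \<in> {1..d}. \<forall>b \<in> {1..d}. \<pi> a < \<pi> b \<longrightarrow> r b / gamma0 d b \<le> r a / gamma0 d a)"

definition neighbour_decomp :: "nat \<Rightarrow> (nat \<times> nat) list \<Rightarrow> (nat \<Rightarrow> real) \<Rightarrow> bool" where
  "neighbour_decomp d ts p \<longleftrightarrow>
     (\<forall>ij \<in> set ts. fst ij \<in> {1..d} \<and> snd ij \<in> {1..d} \<and> fst ij \<noteq> snd ij) \<and>
     (\<forall>k < length ts. \<exists>\<pi>. beta_order d (permv (take k ts) p) \<pi> \<and>
         (\<pi> (fst (ts ! k)) + 1 = \<pi> (snd (ts ! k)) \<or> \<pi> (snd (ts ! k)) + 1 = \<pi> (fst (ts ! k))))"

end

(*
  At infinite temperature every two-level thermalisation replaces both entries by their mean.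
  Starting from p \<otimes> \<eta>_M, the k-th round of P~^(ij) averages memory cell k of level j successively
  with cells 1..N of level i, so after k rounds cell l of level i holds g(k, l), where
  g(k, l) = (g(k, l - 1) + g(k - 1, l)) / 2 with boundary values p_i / N and p_j / N; up to an
  affine change, g(k, l) is the binomial tail P(Bin(k + l - 1, 1/2) \<ge> k).  Summing the cells,
  P^(ij)(p \<otimes> \<eta>_M) = q \<otimes> \<eta>_M with q = (1 - c_N) \<Pi>_ij p + c_N p and c_N = binom(2N, N) / 4^N,
  and Gamma(1/2) = sqrt pi gives c_N = (\<pi> N)^(-1/2) + o(N^(-1/2)).  Composing these maps and
  expanding to first order in c_N yields \<Pi> p + \<epsilon> \<Delta> p.  At \<beta> = 0 only the fact that every
  transposition swaps two distinct levels is used: neither the neighbour condition nor the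
  normalisation of p matters.
*)
theory Submission
  imports Defs "HOL-Analysis.Analysis" "HOL-Combinatorics.Transposition"
begin

definition central_binomial_prob :: "nat \<Rightarrow> real" where
  "central_binomial_prob N = real ((2 * N) choose N) / 4 ^ N"

lemma central_binomial_prob_pochhammer:
  "central_binomial_prob N = pochhammer (1/2) N / fact N"
proof -
  have "real ((2 * N) choose N) = fact (2 * N) / (fact N * fact N)"
    by (simp add: binomial_fact)
  also have "\<dots> = 2 ^ (2 * N) * pochhammer (1/2) N / fact N"
    by (simp add: fact_double)
  finally show ?thesis
    unfolding central_binomial_prob_def by (simp add: power_mult)
qed

lemma central_binomial_prob_Suc:
  "central_binomial_prob (Suc N) = central_binomial_prob N * (real N + 1/2) / (real N + 1)"
  unfolding central_binomial_prob_pochhammer by (simp add: pochhammer_Suc field_simps)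

lemma sqrt_mult_central_binomial_prob_tendsto:
  "(\<lambda>N. sqrt (real N) * central_binomial_prob N) \<longlonglongrightarrow> 1 / sqrt pi"
proof -
  have "(\<lambda>N. inverse (Gamma_series' (1/2::real) N)) \<longlonglongrightarrow> 1 / sqrt pi"
    using tendsto_inverse[OF Gamma_series'_LIMSEQ[of "1/2::real"]]
    by (simp add: Gamma_one_half_real inverse_eq_divide)
  moreover have "\<forall>\<^sub>F N in sequentially.
    inverse (Gamma_series' (1/2::real) N) = sqrt (real N) * central_binomial_prob N"
  proof (rule eventually_sequentiallyI)
    fix N :: nat
    assume "N \<ge> 1"
    then have "exp (1/2 * ln (real N)) = sqrt (real N)" and "fact N = real N * fact (N - 1)"
      by (simp_all add: powr_def powr_half_sqrt [symmetric] fact_reduce)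
    with \<open>N \<ge> 1\<close> show "inverse (Gamma_series' (1/2) N) = sqrt (real N) * central_binomial_prob N"
      unfolding Gamma_series'_def central_binomial_prob_pochhammer
      by (simp add: field_simps real_sqrt_mult [symmetric])
  qed
  ultimately show ?thesis
    by (rule Lim_transform_eventually)
qed

definition binom_tail :: "nat \<Rightarrow> nat \<Rightarrow> real" where
  "binom_tail n k = (\<Sum>j = k..n. real (n choose j)) / 2 ^ n"

lemma binom_tail_0 [simp]: "binom_tail n 0 = 1"
  unfolding binom_tail_def using choose_row_sum[of n]
  by (simp add: atLeast0AtMost flip: of_nat_sum)

lemma binom_tail_beyond [simp]: "binom_tail k (Suc k) = 0"
  unfolding binom_tail_def by simp

lemma binom_tail_Suc: "binom_tail (Suc n) (Suc k) = (binom_tail n (Suc k) + binom_tail n k) / 2"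
proof -
  have "(\<Sum>j = Suc k..Suc n. real (Suc n choose j)) = (\<Sum>j = k..n. real (Suc n choose Suc j))"
    by (rule sum.shift_bounds_cl_Suc_ivl)
  also have "\<dots> = (\<Sum>j = k..n. real (n choose Suc j)) + (\<Sum>j = k..n. real (n choose j))"
    by (simp add: sum.distrib)
  also have "(\<Sum>j = k..n. real (n choose Suc j)) = (\<Sum>j = Suc k..Suc n. real (n choose j))"
    by (rule sum.shift_bounds_cl_Suc_ivl [symmetric])
  also have "\<dots> = (\<Sum>j = Suc k..n. real (n choose j))"
    by (cases "k \<le> n") (simp_all add: sum.cl_ivl_Suc)
  finally show ?thesis
    unfolding binom_tail_def by (simp add: field_simps)
qed

lemma binom_tail_middle: "binom_tail (2 * N) N = 1/2 + central_binomial_prob N / 2"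
proof -
  let ?f = "\<lambda>j. real ((2 * N) choose j)"
  have lower_eq_upper: "(\<Sum>j = 0..N. ?f j) = (\<Sum>j = N..2 * N. ?f j)"
  proof -
    have "(\<Sum>j = N..2 * N. ?f j) = (\<Sum>j = 0..N. ?f (2 * N - j))"
      by (rule sum.reindex_bij_witness[of _ "\<lambda>j. 2 * N - j" "\<lambda>j. 2 * N - j"]) auto
    also have "\<dots> = (\<Sum>j = 0..N. ?f j)"
      by (rule sum.cong) (auto simp: binomial_symmetric [symmetric])
    finally show ?thesis by simp
  qed
  have "(\<Sum>j = 0..2 * N. ?f j) = (\<Sum>j = 0..<N. ?f j) + (\<Sum>j = N..2 * N. ?f j)"
    by (rule sum.atLeastLessThan_concat [of 0 N "Suc (2 * N)",
          simplified atLeastLessThanSuc_atLeastAtMost, symmetric]) auto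
  moreover have "(\<Sum>j = 0..N. ?f j) = (\<Sum>j = 0..<N. ?f j) + ?f N"
    by (simp add: atLeastLessThanSuc_atLeastAtMost [symmetric])
  moreover have "(\<Sum>j = 0..2 * N. ?f j) = 2 ^ (2 * N)"
    using choose_row_sum[of "2 * N"] by (simp add: atLeast0AtMost flip: of_nat_sum)
  ultimately have "(\<Sum>j = N..2 * N. ?f j) = (2 ^ (2 * N) + ?f N) / 2"
    using lower_eq_upper by simp
  moreover have "(2::real) ^ (2 * N) = 4 ^ N"
    by (simp add: power_mult)
  ultimately show ?thesis
    unfolding binom_tail_def central_binomial_prob_def by (simp add: field_simps)
qed

text \<open>After \<open>k\<close> rounds of the two-block averaging process started from the constant values
  \<open>x\<close> (first block) and \<open>y\<close> (second block), \<open>mix_grid x y k l\<close> is the content of cell \<open>l\<close>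
  of the first block, and \<open>mix_grid x y k N\<close> that of cell \<open>k\<close> of the second block.\<close>
fun mix_grid :: "real \<Rightarrow> real \<Rightarrow> nat \<Rightarrow> nat \<Rightarrow> real" where
  "mix_grid x y 0 l = x"
| "mix_grid x y (Suc k) 0 = y"
| "mix_grid x y (Suc k) (Suc l) = (mix_grid x y (Suc k) l + mix_grid x y k (Suc l)) / 2"

declare mix_grid.simps(3) [simp del]

lemma mix_grid_affine: "mix_grid x y k l = y + (x - y) * mix_grid 1 0 k l"
  by (induction x y k l rule: mix_grid.induct) (simp_all add: mix_grid.simps(3) field_simps)

lemma mix_grid_swap: "0 < k + l \<Longrightarrow> mix_grid x y k l = mix_grid y x l k"
  by (induction x y k l rule: mix_grid.induct) (auto simp: mix_grid.simps(3) gr0_conv_Suc)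

lemma mix_grid_diag: "mix_grid 1 0 (Suc n) (Suc n) = 1/2"
  using mix_grid_swap[of "Suc n" "Suc n" 1 0] mix_grid_affine[of 0 1 "Suc n" "Suc n"] by simp

lemma mix_grid_binom_tail: "0 < k + l \<Longrightarrow> mix_grid 1 0 k l = binom_tail (k + l - 1) k"
proof (induction "1::real" "0::real" k l rule: mix_grid.induct)
  case (3 k l)
  then show ?case by (cases k; cases l) (simp_all add: mix_grid.simps(3) binom_tail_Suc)
qed simp_all

lemma sum_mix_grid_Suc:
  "(\<Sum>l = 1..L. mix_grid x y (Suc k) l) = (\<Sum>l = 1..L. mix_grid x y k l) + y - mix_grid x y (Suc k) L"
  by (induction L) (simp_all add: mix_grid.simps(3) field_simps)

lemma sum_mix_grid_1_0_diag: "(\<Sum>l = 1..N. mix_grid 1 0 N l) = real N * central_binomial_prob N"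
proof (induction N)
  case (Suc N)
  have "(\<Sum>l = 1..Suc N. mix_grid 1 0 (Suc N) l) = (\<Sum>l = 1..Suc N. mix_grid 1 0 N l) - 1/2"
    using sum_mix_grid_Suc[of 1 0 N "Suc N"] by (simp add: mix_grid_diag)
  also have "\<dots> = real N * central_binomial_prob N + binom_tail (2 * N) N - 1/2"
    using Suc by (simp add: mix_grid_binom_tail mult_2)
  also have "\<dots> = real (Suc N) * central_binomial_prob (Suc N)"
    unfolding binom_tail_middle central_binomial_prob_Suc by (simp add: field_simps)
  finally show ?case .
qed simp

lemma sum_mix_grid_row:
  assumes "N \<ge> 1"
  shows "(\<Sum>l = 1..N. mix_grid (x / N) (y / N) N l) = y + central_binomial_prob N * (x - y)"
proof -
  have "(\<Sum>l = 1..N. mix_grid (x / N) (y / N) N l) = (\<Sum>l = 1..N. y / N + (x / N - y / N) * mix_grid 1 0 N l)"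
    by (simp add: mix_grid_affine[of "x / N" "y / N"])
  also have "\<dots> = real N * (y / N) + (x / N - y / N) * (\<Sum>l = 1..N. mix_grid 1 0 N l)"
    by (simp add: sum.distrib sum_distrib_left)
  also have "\<dots> = y + central_binomial_prob N * (x - y)"
    using assms sum_mix_grid_1_0_diag[of N] by (simp add: field_simps)
  finally show ?thesis .
qed

lemma sum_mix_grid_column:
  assumes "N \<ge> 1"
  shows "(\<Sum>k = 1..N. mix_grid (x / N) (y / N) k N) = x + central_binomial_prob N * (y - x)"
proof -
  have "(\<Sum>k = 1..N. mix_grid (x / N) (y / N) k N) = (\<Sum>k = 1..N. mix_grid (y / N) (x / N) N k)"
    by (rule sum.cong) (simp_all add: mix_grid_swap)
  then show ?thesis
    using sum_mix_grid_row[OF assms, of y x] by simp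
qed

definition avg2 :: "nat \<Rightarrow> nat \<Rightarrow> (nat \<Rightarrow> real) \<Rightarrow> nat \<Rightarrow> real" where
  "avg2 x y Q = Q(x := (Q x + Q y) / 2, y := (Q x + Q y) / 2)"

lemma therm2_eq_avg2:
  assumes "G x = G y" and "G x \<noteq> 0"
  shows "therm2 G x y Q = avg2 x y Q"
proof -
  have "(Q x + Q y) * G y / (G y + G y) = (Q x + Q y) / 2"
    using assms by (simp add: divide_simps)
  then show ?thesis
    unfolding therm2_def avg2_def using assms by simp
qed

definition sweep :: "nat \<Rightarrow> (nat \<Rightarrow> nat) \<Rightarrow> nat \<Rightarrow> (nat \<Rightarrow> real) \<Rightarrow> nat \<Rightarrow> real" where
  "sweep x ys L Q = foldl (\<lambda>Q l. avg2 x (ys l) Q) Q [1..<Suc L]"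

fun running_avg :: "real \<Rightarrow> (nat \<Rightarrow> real) \<Rightarrow> nat \<Rightarrow> real" where
  "running_avg a f 0 = a"
| "running_avg a f (Suc l) = (running_avg a f l + f (Suc l)) / 2"

lemma sweep_Suc: "sweep x ys (Suc L) Q = avg2 x (ys (Suc L)) (sweep x ys L Q)"
  unfolding sweep_def by simp

lemma sweep_other: "z \<noteq> x \<Longrightarrow> z \<notin> ys ` {1..L} \<Longrightarrow> sweep x ys L Q z = Q z"
proof (induction L)
  case (Suc L)
  then have "z \<noteq> ys (Suc L)" and "z \<notin> ys ` {1..L}"
    by auto
  with Suc show ?case
    by (simp add: sweep_Suc avg2_def)
qed (simp add: sweep_def)

lemma inj_on_Suc_notin_image: "inj_on ys {1..Suc L} \<Longrightarrow> ys (Suc L) \<notin> ys ` {1..L}"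
  using inj_on_image_mem_iff[of ys "{1..Suc L}" "Suc L" "{1..L}"] by auto

lemma sweep_at_center:
  assumes "inj_on ys {1..L}" and "x \<notin> ys ` {1..L}"
  shows "sweep x ys L Q x = running_avg (Q x) (\<lambda>l. Q (ys l)) L"
  using assms
proof (induction L)
  case (Suc L)
  have "inj_on ys {1..L}" and "x \<notin> ys ` {1..L}"
    using Suc.prems by (auto intro: inj_on_subset)
  moreover have "ys (Suc L) \<noteq> x"
    using Suc.prems(2) by auto
  ultimately show ?case
    using Suc inj_on_Suc_notin_image[OF Suc.prems(1)] by (simp add: sweep_Suc avg2_def sweep_other)
qed (simp add: sweep_def)

lemma sweep_at_image:
  assumes "inj_on ys {1..L}" and "x \<notin> ys ` {1..L}" and "l \<in> {1..L}"
  shows "sweep x ys L Q (ys l) = running_avg (Q x) (\<lambda>l. Q (ys l)) l"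
  using assms
proof (induction L)
  case (Suc L)
  have sub: "inj_on ys {1..L}" "x \<notin> ys ` {1..L}"
    using Suc.prems by (auto intro: inj_on_subset)
  have fresh: "ys (Suc L) \<noteq> x" "ys (Suc L) \<notin> ys ` {1..L}"
    using Suc.prems(2) inj_on_Suc_notin_image[OF Suc.prems(1)] by auto
  consider "l = Suc L" | "l \<in> {1..L}"
    using Suc.prems(3) by fastforce
  then show ?case
  proof cases
    case 1
    then show ?thesis
      using sweep_at_center[OF sub] fresh by (simp add: sweep_Suc avg2_def sweep_other)
  next
    case 2
    then have "ys l \<in> ys ` {1..L}"
      by blast
    then have "ys l \<noteq> x" and "ys l \<noteq> ys (Suc L)"
      using Suc.prems(2) fresh(2) by auto
    then show ?thesis
      using Suc.IH[OF sub 2] by (simp add: sweep_Suc avg2_def)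
  qed
qed simp

lemma running_avg_eq_mix_grid:
  "\<forall>l\<in>{1..L}. f l = mix_grid x y k l \<Longrightarrow> running_avg y f L = mix_grid x y (Suc k) L"
  by (induction L) (simp_all add: mix_grid.simps(3))

definition sweep_rounds :: "nat \<Rightarrow> (nat \<Rightarrow> nat) \<Rightarrow> (nat \<Rightarrow> nat) \<Rightarrow> nat \<Rightarrow> (nat \<Rightarrow> real) \<Rightarrow> nat \<Rightarrow> real"
  where "sweep_rounds N u v K Q = foldl (\<lambda>Q k. sweep (v k) u N Q) Q [1..<Suc K]"

lemma sweep_rounds_Suc:
  "sweep_rounds N u v (Suc K) Q = sweep (v (Suc K)) u N (sweep_rounds N u v K Q)"
  unfolding sweep_rounds_def by simp

context
  fixes N :: nat and u v :: "nat \<Rightarrow> nat"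
  assumes inj_u: "inj_on u {1..N}" and inj_v: "inj_on v {1..N}"
    and disjoint: "u ` {1..N} \<inter> v ` {1..N} = {}"
begin

lemma sweep_rounds_other:
  "K \<le> N \<Longrightarrow> z \<notin> u ` {1..N} \<union> v ` {1..N} \<Longrightarrow> sweep_rounds N u v K Q z = Q z"
proof (induction K)
  case (Suc K)
  then have "z \<noteq> v (Suc K)"
    by auto
  with Suc show ?case
    by (simp add: sweep_rounds_Suc sweep_other)
qed (simp add: sweep_rounds_def)

lemma sweep_rounds_pending:
  "k \<in> {1..N} \<Longrightarrow> K < k \<Longrightarrow> sweep_rounds N u v K Q (v k) = Q (v k)"
proof (induction K)
  case (Suc K)
  then have "v k \<noteq> v (Suc K)"
    using inj_v by (auto dest: inj_onD)
  moreover have "v k \<notin> u ` {1..N}"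
    using disjoint Suc.prems(1) by blast
  ultimately show ?case
    using Suc by (simp add: sweep_rounds_Suc sweep_other)
qed (simp add: sweep_rounds_def)

context
  fixes Q :: "nat \<Rightarrow> real" and x y :: real
  assumes Q_u: "\<forall>l\<in>{1..N}. Q (u l) = x" and Q_v: "\<forall>k\<in>{1..N}. Q (v k) = y"
begin

lemma sweep_rounds_start: "K < N \<Longrightarrow> sweep_rounds N u v K Q (v (Suc K)) = y"
  using sweep_rounds_pending[of "Suc K" K] Q_v by simp

lemma sweep_rounds_row:
  "K \<le> N \<Longrightarrow> l \<in> {1..N} \<Longrightarrow> sweep_rounds N u v K Q (u l) = mix_grid x y K l"
proof (induction K arbitrary: l)
  case (Suc K)
  have "Suc K \<in> {1..N}"
    using Suc.prems(1) by simp
  then have "v (Suc K) \<notin> u ` {1..N}"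
    using disjoint by blast
  with Suc sweep_rounds_start[of K] show ?case
    by (simp add: sweep_rounds_Suc sweep_at_image[OF inj_u] running_avg_eq_mix_grid)
qed (simp add: sweep_rounds_def Q_u)

lemma sweep_rounds_column:
  "K \<le> N \<Longrightarrow> k \<in> {1..K} \<Longrightarrow> sweep_rounds N u v K Q (v k) = mix_grid x y k N"
proof (induction K)
  case (Suc K)
  have K: "Suc K \<in> {1..N}"
    using Suc.prems(1) by simp
  then have fresh: "v (Suc K) \<notin> u ` {1..N}"
    using disjoint by blast
  consider "k = Suc K" | "k \<in> {1..K}"
    using Suc.prems(2) by fastforce
  then show ?case
  proof cases
    case 1
    then show ?thesis
      using Suc.prems(1) sweep_rounds_start[of K] sweep_rounds_row[of K]
      by (simp add: sweep_rounds_Suc sweep_at_center[OF inj_u fresh] running_avg_eq_mix_grid)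
  next
    case 2
    with Suc.prems(1) have k: "k \<in> {1..N}" "k \<noteq> Suc K"
      by auto
    then have "v k \<noteq> v (Suc K)"
      using inj_v K by (auto dest: inj_onD)
    moreover have "v k \<notin> u ` {1..N}"
      using disjoint k(1) by blast
    ultimately show ?thesis
      using Suc 2 by (simp add: sweep_rounds_Suc sweep_other)
  qed
qed simp

end

end

definition cell :: "nat \<Rightarrow> nat \<Rightarrow> nat \<Rightarrow> nat" where
  "cell N a k = (a - 1) * N + k"

lemma cell_div_mod:
  assumes "k \<in> {1..N}"
  shows "(cell N a k - 1) div N = a - 1" and "(cell N a k - 1) mod N = k - 1"
proof -
  obtain m where "k = Suc m" "m < N"
    using assms by (cases k) auto
  moreover from this have "cell N a k - 1 = m + N * (a - 1)"
    by (simp add: cell_def)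
  ultimately show "(cell N a k - 1) div N = a - 1" and "(cell N a k - 1) mod N = k - 1"
    by simp_all
qed

lemma cell_eq_iff:
  assumes "a \<ge> 1" "b \<ge> 1" "k \<in> {1..N}" "l \<in> {1..N}"
  shows "cell N a k = cell N b l \<longleftrightarrow> a = b \<and> k = l"
proof
  assume "cell N a k = cell N b l"
  then have "a - 1 = b - 1" and "k - 1 = l - 1"
    using cell_div_mod[OF assms(3), of a] cell_div_mod[OF assms(4), of b] by simp_all
  then show "a = b \<and> k = l"
    using assms by auto
qed simp

lemma inj_on_cell: "a \<ge> 1 \<Longrightarrow> inj_on (cell N a) {1..N}"
  by (auto intro: inj_onI simp: cell_eq_iff)

lemma cell_in_range:
  assumes "a \<in> {1..d}" "k \<in> {1..N}"
  shows "cell N a k \<in> {1..d * N}"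
proof -
  have "(a - 1) * N + k \<le> (d - 1) * N + N"
    using assms by (intro add_mono mult_right_mono) auto
  also have "\<dots> = d * N"
    using assms by (cases d) auto
  finally show ?thesis
    using assms by (simp add: cell_def)
qed

lemma tensor_cell: "a \<in> {1..d} \<Longrightarrow> k \<in> {1..N} \<Longrightarrow> tensor d N q e (cell N a k) = q a * e k"
  using cell_in_range[of a d k N] cell_div_mod[of k N a] by (auto simp: tensor_def)

lemma marg_eq_sum_cells: "marg N Q a = (\<Sum>k = 1..N. Q (cell N a k))"
  unfolding marg_def cell_def ..

lemma marg_tensor_etaM:
  assumes "a \<in> {1..d}" "N \<ge> 1"
  shows "marg N (tensor d N r (etaM N)) a = r a"
proof -
  have "marg N (tensor d N r (etaM N)) a = (\<Sum>k = 1..N. r a / real N)"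
    unfolding marg_eq_sum_cells using assms by (intro sum.cong) (simp_all add: tensor_cell etaM_def)
  then show ?thesis
    using assms by simp
qed

lemma tensor_cong:
  assumes "N \<ge> 1" and "\<forall>a\<in>{1..d}. r a = r' a"
  shows "tensor d N r e = tensor d N r' e"
proof
  fix x
  show "tensor d N r e x = tensor d N r' e x"
  proof (cases "1 \<le> x \<and> x \<le> d * N")
    case True
    then have "x - 1 < d * N"
      by linarith
    then have "(x - 1) div N < d"
      by (rule less_mult_imp_div_less)
    then show ?thesis
      using True assms(2) by (simp add: tensor_def)
  next
    case False
    then show ?thesis
      unfolding tensor_def by (simp only: if_not_P if_False)
  qed
qed

lemma Ptilde_eq_sweeps:
  assumes "d > 0" "N > 0"
  shows "Ptilde d N i j Q = sweep_rounds N (cell N i) (cell N j) N Q"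
proof -
  have "therm2 (Gamma0 d N) x y = avg2 x y" for x y
    using assms by (intro ext therm2_eq_avg2) (simp_all add: Gamma0_def gamma0_def etaM_def)
  then have "round_ij d N i j k Q = sweep (cell N j k) (cell N i) N Q" for k Q
    unfolding round_ij_def sweep_def cell_def by simp
  then show ?thesis
    unfolding Ptilde_def sweep_rounds_def by simp
qed

definition partial_swap :: "real \<Rightarrow> nat \<Rightarrow> nat \<Rightarrow> (nat \<Rightarrow> real) \<Rightarrow> nat \<Rightarrow> real" where
  "partial_swap c i j q a = swapv i j q a + c * (q a - swapv i j q a)"

lemma marg_Ptilde_tensor:
  assumes i: "i \<in> {1..d}" and j: "j \<in> {1..d}" and "i \<noteq> j" and N: "N \<ge> 1" and a: "a \<in> {1..d}"
  shows "marg N (Ptilde d N i j (tensor d N q (etaM N))) a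
    = partial_swap (central_binomial_prob N) i j q a"
proof -
  let ?Q = "tensor d N q (etaM N)"
  let ?P = "Ptilde d N i j ?Q"
  have disjoint: "cell N i ` {1..N} \<inter> cell N j ` {1..N} = {}"
    using i j \<open>i \<noteq> j\<close> by (auto simp: cell_eq_iff)
  have Q_i: "\<forall>l\<in>{1..N}. ?Q (cell N i l) = q i / real N"
    and Q_j: "\<forall>k\<in>{1..N}. ?Q (cell N j k) = q j / real N"
    using i j by (simp_all add: tensor_cell etaM_def)
  have P: "?P = sweep_rounds N (cell N i) (cell N j) N ?Q"
    using i N by (simp add: Ptilde_eq_sweeps)
  note rounds = inj_on_cell[of i] inj_on_cell[of j] disjoint
  consider "a = i" | "a = j" | "a \<noteq> i" "a \<noteq> j"
    by blast
  then show ?thesis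
  proof cases
    case 1
    then have "marg N ?P a = (\<Sum>l = 1..N. mix_grid (q i / N) (q j / N) N l)"
      using i j sweep_rounds_row[OF rounds Q_i Q_j] by (simp add: P marg_eq_sum_cells)
    with 1 show ?thesis
      using sum_mix_grid_row[OF N, of "q i" "q j"] by (simp add: partial_swap_def swapv_def)
  next
    case 2
    then have "marg N ?P a = (\<Sum>k = 1..N. mix_grid (q i / N) (q j / N) k N)"
      using i j sweep_rounds_column[OF rounds Q_i Q_j] by (simp add: P marg_eq_sum_cells)
    with 2 \<open>i \<noteq> j\<close> show ?thesis
      using sum_mix_grid_column[OF N, of "q i" "q j"] by (simp add: partial_swap_def swapv_def)
  next
    case 3
    then have "cell N a k \<notin> cell N i ` {1..N} \<union> cell N j ` {1..N}" if "k \<in> {1..N}" for k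
      using a i j that by (auto simp: cell_eq_iff)
    then have "marg N ?P a = marg N ?Q a"
      using i j sweep_rounds_other[OF rounds] by (simp add: P marg_eq_sum_cells)
    with 3 a N show ?thesis
      by (simp add: marg_tensor_etaM partial_swap_def swapv_def)
  qed
qed

lemma Pij_tensor:
  assumes "i \<in> {1..d}" "j \<in> {1..d}" "i \<noteq> j" "N \<ge> 1"
  shows "Pij d N i j (tensor d N q (etaM N))
    = tensor d N (partial_swap (central_binomial_prob N) i j q) (etaM N)"
  unfolding Pij_def memtherm_def using assms by (intro tensor_cong) (simp_all add: marg_Ptilde_tensor)

definition partial_swaps :: "real \<Rightarrow> (nat \<times> nat) list \<Rightarrow> (nat \<Rightarrow> real) \<Rightarrow> nat \<Rightarrow> real" where
  "partial_swaps c ts p = foldl (\<lambda>r ij. partial_swap c (fst ij) (snd ij) r) p ts"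

lemma PPi_tensor:
  assumes "\<forall>ij\<in>set ts. fst ij \<in> {1..d} \<and> snd ij \<in> {1..d} \<and> fst ij \<noteq> snd ij" and "N \<ge> 1"
  shows "PPi d N ts (tensor d N p (etaM N))
    = tensor d N (partial_swaps (central_binomial_prob N) ts p) (etaM N)"
  using assms(1)
proof (induction ts arbitrary: p)
  case (Cons t ts)
  then show ?case
    using assms(2) by (cases t) (simp add: PPi_def partial_swaps_def Pij_tensor)
qed (simp add: PPi_def partial_swaps_def)

lemma swapv_eq_transpose: "swapv i j r a = r (Transposition.transpose i j a)"
  unfolding swapv_def Transposition.transpose_def by simp

lemma permv_snoc: "permv (ts @ [t]) r a = permv ts r (Transposition.transpose (fst t) (snd t) a)"
  unfolding permv_def by (simp add: swapv_eq_transpose)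

lemma partial_swaps_snoc:
  "partial_swaps c (ts @ [t]) p a = partial_swaps c ts p (Transposition.transpose (fst t) (snd t) a)
    + c * (partial_swaps c ts p a - partial_swaps c ts p (Transposition.transpose (fst t) (snd t) a))"
  unfolding partial_swaps_def by (simp add: partial_swap_def swapv_eq_transpose)

lemma Delta_apply_snoc:
  "Delta_apply (ts @ [t]) p a = Delta_apply ts p (Transposition.transpose (fst t) (snd t) a)
    + (permv ts p a - permv ts p (Transposition.transpose (fst t) (snd t) a))"
proof -
  let ?\<sigma> = "Transposition.transpose (fst t) (snd t)"
  let ?term = "\<lambda>ts l a. permv (drop (Suc l) ts)
    (\<lambda>b. permv (take l ts) p b - swapv (fst (ts ! l)) (snd (ts ! l)) (permv (take l ts) p) b) a"
  have "Delta_apply (ts @ [t]) p a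
      = (\<Sum>l < length ts. ?term (ts @ [t]) l a) + ?term (ts @ [t]) (length ts) a"
    unfolding Delta_apply_def by simp
  also have "(\<Sum>l < length ts. ?term (ts @ [t]) l a) = (\<Sum>l < length ts. ?term ts l (?\<sigma> a))"
    by (intro sum.cong) (simp_all add: nth_append permv_snoc)
  also have "?term (ts @ [t]) (length ts) a = permv ts p a - permv ts p (?\<sigma> a)"
    by (simp add: permv_def swapv_eq_transpose)
  finally show ?thesis
    unfolding Delta_apply_def .
qed

lemma partial_swaps_tendsto:
  assumes "c \<longlonglongrightarrow> 0"
  shows "(\<lambda>N. partial_swaps (c N) ts p a) \<longlonglongrightarrow> permv ts p a"
proof (induction ts arbitrary: a rule: rev_induct)
  case Nil
  show ?case by (simp add: partial_swaps_def permv_def)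
next
  case (snoc t ts)
  let ?b = "Transposition.transpose (fst t) (snd t) a"
  have "(\<lambda>N. partial_swaps (c N) ts p ?b + c N * (partial_swaps (c N) ts p a - partial_swaps (c N) ts p ?b))
      \<longlonglongrightarrow> permv ts p ?b + 0 * (permv ts p a - permv ts p ?b)"
    by (intro tendsto_intros snoc.IH assms)
  then show ?case
    by (simp add: partial_swaps_snoc permv_snoc)
qed

text \<open>\<open>Delta_apply ts p\<close> is the derivative of \<open>c \<mapsto> partial_swaps c ts p\<close> at \<open>c = 0\<close>,
  so replacing \<open>c\<close> by an \<open>o(1/s)\<close>-close \<open>e\<close> in the linearisation costs only \<open>o(1/s)\<close>.\<close>
lemma partial_swaps_first_order:
  assumes c: "c \<longlonglongrightarrow> 0" and ce: "(\<lambda>N. s N * (c N - e N)) \<longlonglongrightarrow> 0"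
    and se: "(\<lambda>N. s N * e N) \<longlonglongrightarrow> L"
  shows "(\<lambda>N. s N * (partial_swaps (c N) ts p a - (permv ts p a + e N * Delta_apply ts p a)))
    \<longlonglongrightarrow> 0"
proof (induction ts arbitrary: a rule: rev_induct)
  case Nil
  show ?case by (simp add: partial_swaps_def permv_def Delta_apply_def)
next
  case (snoc t ts)
  let ?b = "Transposition.transpose (fst t) (snd t) a"
  let ?q = "\<lambda>N x. partial_swaps (c N) ts p x"
  have "s N * (partial_swaps (c N) (ts @ [t]) p a - (permv (ts @ [t]) p a + e N * Delta_apply (ts @ [t]) p a))
    = s N * (?q N ?b - (permv ts p ?b + e N * Delta_apply ts p ?b))
      + s N * (c N - e N) * (?q N a - ?q N ?b)
      + s N * e N * ((?q N a - permv ts p a) - (?q N ?b - permv ts p ?b))" for N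
    by (simp add: partial_swaps_snoc permv_snoc Delta_apply_snoc algebra_simps)
  moreover have "(\<lambda>N. s N * (?q N ?b - (permv ts p ?b + e N * Delta_apply ts p ?b))
      + s N * (c N - e N) * (?q N a - ?q N ?b)
      + s N * e N * ((?q N a - permv ts p a) - (?q N ?b - permv ts p ?b)))
    \<longlonglongrightarrow> 0 + 0 * (permv ts p a - permv ts p ?b) + L * ((permv ts p a - permv ts p a) - (permv ts p ?b - permv ts p ?b))"
    by (intro tendsto_intros snoc.IH ce se partial_swaps_tendsto[OF c])
  ultimately show ?case
    by simp
qed

lemma sqrt_mult_inverse_sqrt_pi_mult_tendsto:
  "(\<lambda>N. sqrt (real N) * (1 / sqrt (pi * real N))) \<longlonglongrightarrow> 1 / sqrt pi"
proof (rule Lim_transform_eventually[OF tendsto_const], rule eventually_sequentiallyI)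
  fix N :: nat
  assume "N \<ge> 1"
  then have "sqrt (real N) > 0"
    by simp
  then show "1 / sqrt pi = sqrt (real N) * (1 / sqrt (pi * real N))"
    by (simp add: real_sqrt_mult)
qed

lemma central_binomial_prob_expansion:
  "(\<lambda>N. sqrt (real N) * (central_binomial_prob N - 1 / sqrt (pi * real N))) \<longlonglongrightarrow> 0"
  using tendsto_diff[OF sqrt_mult_central_binomial_prob_tendsto sqrt_mult_inverse_sqrt_pi_mult_tendsto]
  by (simp add: right_diff_distrib)

lemma central_binomial_prob_tendsto_0: "central_binomial_prob \<longlonglongrightarrow> 0"
proof -
  have "(\<lambda>N. sqrt (1 / real N)) \<longlonglongrightarrow> 0"
    using tendsto_real_sqrt[OF lim_1_over_n] by simp
  then have "(\<lambda>N. (sqrt (real N) * central_binomial_prob N) * (1 / sqrt (real N))) \<longlonglongrightarrow> 1 / sqrt pi * 0"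
    by (intro tendsto_mult sqrt_mult_central_binomial_prob_tendsto) (simp add: real_sqrt_divide)
  moreover have "\<forall>\<^sub>F N in sequentially.
      (sqrt (real N) * central_binomial_prob N) * (1 / sqrt (real N)) = central_binomial_prob N"
    by (intro eventually_sequentiallyI[of 1]) simp
  ultimately show ?thesis
    by (simp add: Lim_transform_eventually)
qed

theorem theorem1:
  fixes d :: nat and p :: "nat \<Rightarrow> real" and ts :: "(nat \<times> nat) list"
  assumes "d \<ge> 2"
    and "prob_vec d p"
    and "neighbour_decomp d ts p"
  shows "(\<forall>N \<ge> 1. PPi d N ts (tensor d N p (etaM N))
                 = tensor d N (marg N (PPi d N ts (tensor d N p (etaM N)))) (etaM N))
       \<and> (\<forall>a \<in> {1..d}.
            ((\<lambda>N. sqrt (real N) *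
                 (marg N (PPi d N ts (tensor d N p (etaM N))) a
                  - (permv ts p a + (1 / sqrt (pi * real N)) * Delta_apply ts p a)))
             \<longlonglongrightarrow> 0))
       \<and> (\<forall>a \<in> {1..d}.
            ((\<lambda>N. marg N (PPi d N ts (tensor d N p (etaM N))) a) \<longlonglongrightarrow> permv ts p a))"
proof -
  let ?P = "\<lambda>N. PPi d N ts (tensor d N p (etaM N))"
  let ?q = "\<lambda>N. partial_swaps (central_binomial_prob N) ts p"
  have "\<forall>ij\<in>set ts. fst ij \<in> {1..d} \<and> snd ij \<in> {1..d} \<and> fst ij \<noteq> snd ij"
    using assms(3) unfolding neighbour_decomp_def by blast
  then have P_eq: "?P N = tensor d N (?q N) (etaM N)" if "N \<ge> 1" for N
    using that by (rule PPi_tensor)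
  have marg_P: "marg N (?P N) a = ?q N a" if "N \<ge> 1" "a \<in> {1..d}" for N a
    using that by (simp add: P_eq marg_tensor_etaM)
  have "?P N = tensor d N (marg N (?P N)) (etaM N)" if "N \<ge> 1" for N
    unfolding P_eq[OF that] using that by (intro tensor_cong) (simp_all add: marg_tensor_etaM)
  moreover have "(\<lambda>N. sqrt (real N) * (marg N (?P N) a
      - (permv ts p a + 1 / sqrt (pi * real N) * Delta_apply ts p a))) \<longlonglongrightarrow> 0"
    if "a \<in> {1..d}" for a
    by (rule Lim_transform_eventually[OF partial_swaps_first_order[OF central_binomial_prob_tendsto_0
          central_binomial_prob_expansion sqrt_mult_inverse_sqrt_pi_mult_tendsto, where ts = ts and p = p and a = a]])
      (use that in \<open>intro eventually_sequentiallyI[of 1], simp add: marg_P\<close>)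
  moreover have "(\<lambda>N. marg N (?P N) a) \<longlonglongrightarrow> permv ts p a" if "a \<in> {1..d}" for a
    by (rule Lim_transform_eventually[OF partial_swaps_tendsto[OF central_binomial_prob_tendsto_0]])
      (use that in \<open>intro eventually_sequentiallyI[of 1], simp add: marg_P\<close>)
  ultimately show ?thesis
    by blast
qed

end
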